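(* Let $S$ be a nonabelian finite simple group, $I$ a set, and $G=S^I$ (the Cartesian product). Then every finite quotient of $G$ by an abstract normal subgroup of finite index is semisimple, i.e. is a direct product of finitely many nonabelian finite simple groups. *)

theory Defs
  imports "HOL-Algebra.Algebra"
begin

end

theory Submission
  imports Defs
begin

text \<open>
  In a finite nonabelian simple group \<open>S\<close>, the products of commutators \<open>[h, g]\<close> with a fixed
  \<open>g \<noteq> 1\<close> form a normal subgroup, hence all of \<open>S\<close>; by finiteness there is a bound \<open>K\<close> such that
  every element of \<open>S\<close> is a product of \<open>K\<close> such commutators, uniformly in \<open>g\<close>. Applied
  coordinatewise in \<open>S\<^sup>I\<close>, this shows that a normal subgroup \<open>N\<close> contains every element whose
  support lies in the support of an element of \<open>N\<close>, so \<open>N\<close> is determined by the ideal of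
  negligible index sets (the supports of its elements). Elements supported on disjoint
  non-negligible sets lie in distinct cosets, so finite index bounds the length of a disjoint
  family of non-negligible sets. A maximal such family \<open>A\<^sub>1, \<dots>, A\<^sub>n\<close> covers \<open>I\<close> up to a negligible
  set, and the non-negligible subsets of each \<open>A\<^sub>k\<close> form an ultrafilter. As \<open>S\<close> is finite, every
  \<open>x \<in> S\<^sup>I\<close> is constant on each \<open>A\<^sub>k\<close> outside a negligible set; recording these \<open>n\<close> values is a
  surjective homomorphism \<open>S\<^sup>I \<rightarrow> S\<^sup>n\<close> with kernel \<open>N\<close>.
\<close>

section \<open>Products of commutators with a fixed element\<close>

definition commutators_with :: "('a, 'b) monoid_scheme \<Rightarrow> 'a \<Rightarrow> 'a set" where
  "commutators_with G g = {h \<otimes>\<^bsub>G\<^esub> g \<otimes>\<^bsub>G\<^esub> inv\<^bsub>G\<^esub> h \<otimes>\<^bsub>G\<^esub> inv\<^bsub>G\<^esub> g | h. h \<in> carrier G}"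

fun commutator_products :: "('a, 'b) monoid_scheme \<Rightarrow> 'a \<Rightarrow> nat \<Rightarrow> 'a set" where
  "commutator_products G g 0 = {\<one>\<^bsub>G\<^esub>}"
| "commutator_products G g (Suc k) =
     {c \<otimes>\<^bsub>G\<^esub> b | c b. c \<in> commutators_with G g \<and> b \<in> commutator_products G g k}"

definition commutator_closure :: "('a, 'b) monoid_scheme \<Rightarrow> 'a \<Rightarrow> 'a set" where
  "commutator_closure G g = (\<Union>k. commutator_products G g k)"

lemma finite_subset_UN_mono:
  assumes "finite A" and mono: "\<And>k m. k \<le> m \<Longrightarrow> f k \<subseteq> f m" and "A \<subseteq> (\<Union>k. f k)"
  shows "\<exists>k. A \<subseteq> f (k::nat)"
  using assms(1,3)
proof (induction A rule: finite_induct)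
  case (insert x A)
  then obtain k m where "A \<subseteq> f k" "x \<in> f m" by blast
  then have "insert x A \<subseteq> f (max k m)" using mono[of k "max k m"] mono[of m "max k m"] by auto
  then show ?case ..
qed simp

context group begin

lemma mult_inv_cancel_left: "x \<in> carrier G \<Longrightarrow> y \<in> carrier G \<Longrightarrow> x \<otimes> (inv x \<otimes> y) = y"
  by (simp add: m_assoc[symmetric])

lemma inv_mult_cancel_left: "x \<in> carrier G \<Longrightarrow> y \<in> carrier G \<Longrightarrow> inv x \<otimes> (x \<otimes> y) = y"
  by (simp add: m_assoc[symmetric])

lemma commutators_with_closed: "g \<in> carrier G \<Longrightarrow> commutators_with G g \<subseteq> carrier G"
  unfolding commutators_with_def by auto

lemma commutator_in_commutators_with:
  "h \<in> carrier G \<Longrightarrow> h \<otimes> g \<otimes> inv h \<otimes> inv g \<in> commutators_with G g"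
  unfolding commutators_with_def by auto

lemma one_in_commutators_with: "g \<in> carrier G \<Longrightarrow> \<one> \<in> commutators_with G g"
  using commutator_in_commutators_with[of \<one> g] by simp

lemma commutator_products_closed: "g \<in> carrier G \<Longrightarrow> commutator_products G g k \<subseteq> carrier G"
  by (induction k) (use commutators_with_closed in auto)

lemma commutator_products_mono:
  assumes g: "g \<in> carrier G" and "k \<le> m"
  shows "commutator_products G g k \<subseteq> commutator_products G g m"
  using \<open>k \<le> m\<close>
proof (induction rule: dec_induct)
  case (step m)
  have "commutator_products G g m \<subseteq> commutator_products G g (Suc m)"
  proof
    fix a assume a: "a \<in> commutator_products G g m"
    then have "\<one> \<otimes> a \<in> commutator_products G g (Suc m)"
      using one_in_commutators_with[OF g] by auto
    moreover have "a \<in> carrier G" using a commutator_products_closed[OF g] by blast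
    ultimately show "a \<in> commutator_products G g (Suc m)" by simp
  qed
  with step show ?case by blast
qed simp

lemma commutator_products_mult:
  assumes g: "g \<in> carrier G"
  shows "a \<in> commutator_products G g k \<Longrightarrow> b \<in> commutator_products G g m
    \<Longrightarrow> a \<otimes> b \<in> commutator_products G g (k + m)"
proof (induction k arbitrary: a)
  case 0
  then have "a = \<one>" "b \<in> carrier G" using commutator_products_closed[OF g] by auto
  with 0 show ?case by simp
next
  case (Suc k)
  then obtain c d where cd: "c \<in> commutators_with G g" "d \<in> commutator_products G g k" "a = c \<otimes> d"
    by auto
  have "c \<in> carrier G" "d \<in> carrier G" "b \<in> carrier G"
    using cd Suc.prems(2) commutators_with_closed[OF g] commutator_products_closed[OF g] by auto
  with cd have "a \<otimes> b = c \<otimes> (d \<otimes> b)" by (simp add: m_assoc)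
  with cd Suc show ?case by auto
qed

lemma commutator_closure_closed: "g \<in> carrier G \<Longrightarrow> commutator_closure G g \<subseteq> carrier G"
  unfolding commutator_closure_def using commutator_products_closed by blast

lemma one_in_commutator_closure: "\<one> \<in> commutator_closure G g"
proof -
  have "\<one> \<in> commutator_products G g 0" by simp
  then show ?thesis unfolding commutator_closure_def by blast
qed

lemma commutator_closure_mult:
  "g \<in> carrier G \<Longrightarrow> a \<in> commutator_closure G g \<Longrightarrow> b \<in> commutator_closure G g
    \<Longrightarrow> a \<otimes> b \<in> commutator_closure G g"
  unfolding commutator_closure_def using commutator_products_mult by blast

lemma commutators_with_subset_closure:
  assumes g: "g \<in> carrier G"
  shows "commutators_with G g \<subseteq> commutator_closure G g"
proof
  fix c assume c: "c \<in> commutators_with G g"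
  then have "c \<otimes> \<one> = c" using commutators_with_closed[OF g] by auto
  with c have "c \<in> commutator_products G g 1" by force
  then show "c \<in> commutator_closure G g" unfolding commutator_closure_def by blast
qed

lemma inv_eq_pow_ord_minus_1:
  assumes "finite (carrier G)" and a: "a \<in> carrier G"
  shows "inv a = a [^] (ord a - 1)"
proof (rule inv_equality)
  have "Suc (ord a - 1) = ord a" using ord_ge_1[OF assms] by simp
  then have "a [^] (ord a - 1) \<otimes> a = a [^] ord a" using nat_pow_Suc by metis
  then show "a [^] (ord a - 1) \<otimes> a = \<one>" using a by simp
qed (use a in simp_all)

lemma commutator_closure_inv:
  assumes fin: "finite (carrier G)" and g: "g \<in> carrier G" and a: "a \<in> commutator_closure G g"
  shows "inv a \<in> commutator_closure G g"
proof -
  have "a [^] (n::nat) \<in> commutator_closure G g" for n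
    by (induction n) (simp_all add: one_in_commutator_closure commutator_closure_mult[OF g _ a])
  then show ?thesis
    using inv_eq_pow_ord_minus_1[OF fin] a commutator_closure_closed[OF g] by auto
qed

lemma commutator_closure_normal:
  assumes fin: "finite (carrier G)" and g: "g \<in> carrier G"
  shows "commutator_closure G g \<lhd> G"
proof (rule normal_invI)
  show "subgroup (commutator_closure G g) G"
    by (rule subgroupI) (use commutator_closure_closed[OF g] commutator_closure_inv[OF fin g]
        commutator_closure_mult[OF g] one_in_commutator_closure in blast)+
  fix x a assume x: "x \<in> carrier G" and "a \<in> commutator_closure G g"
  then obtain k where "a \<in> commutator_products G g k" unfolding commutator_closure_def by blast
  then show "x \<otimes> a \<otimes> inv x \<in> commutator_closure G g"
  proof (induction k arbitrary: a)
    case 0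
    then show ?case using x one_in_commutator_closure by simp
  next
    case (Suc k)
    then obtain c d where c: "c \<in> commutators_with G g" and d: "d \<in> commutator_products G g k"
      and a: "a = c \<otimes> d" by auto
    from c obtain h where h: "h \<in> carrier G" and c: "c = h \<otimes> g \<otimes> inv h \<otimes> inv g"
      unfolding commutators_with_def by blast
    have "d \<in> carrier G" using d commutator_products_closed[OF g] by blast
    \<comment> \<open>the conjugate of \<open>[h, g]\<close> by \<open>x\<close> is \<open>[x h, g] [x, g]\<inverse>\<close>\<close>
    then have "x \<otimes> a \<otimes> inv x = (x \<otimes> h \<otimes> g \<otimes> inv (x \<otimes> h) \<otimes> inv g)
        \<otimes> inv (x \<otimes> g \<otimes> inv x \<otimes> inv g) \<otimes> (x \<otimes> d \<otimes> inv x)"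
      using a c x h g by (simp add: inv_mult_group m_assoc mult_inv_cancel_left inv_mult_cancel_left)
    moreover have "x \<otimes> h \<otimes> g \<otimes> inv (x \<otimes> h) \<otimes> inv g \<in> commutator_closure G g"
      using commutators_with_subset_closure[OF g] commutator_in_commutators_with[of "x \<otimes> h" g] x h
      by blast
    moreover have "inv (x \<otimes> g \<otimes> inv x \<otimes> inv g) \<in> commutator_closure G g"
      using commutators_with_subset_closure[OF g] commutator_in_commutators_with[OF x, of g]
        commutator_closure_inv[OF fin g] by blast
    ultimately show ?case using Suc.IH[OF d] commutator_closure_mult[OF g] by presburger
  qed
qed

lemma commutator_products_subset_normal:
  assumes N: "N \<lhd> G" and g: "g \<in> N"
  shows "commutator_products G g k \<subseteq> N"
proof (induction k)
  case 0
  then show ?case using N by (simp add: normal_def subgroup.one_closed)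
next
  case (Suc k)
  have "h \<otimes> g \<otimes> inv h \<otimes> inv g \<in> N" if h: "h \<in> carrier G" for h
    using normal.inv_op_closed2[OF N h g] subgroup.m_inv_closed[OF normal_imp_subgroup[OF N] g]
      subgroup.m_closed[OF normal_imp_subgroup[OF N]] by blast
  then have "commutators_with G g \<subseteq> N" unfolding commutators_with_def by blast
  with Suc show ?case using subgroup.m_closed[OF normal_imp_subgroup[OF N]] by auto
qed

end

context simple_group begin

lemma central_element_imp_comm_group:
  assumes g: "g \<in> carrier G" "g \<noteq> \<one>" and central: "\<And>h. h \<in> carrier G \<Longrightarrow> h \<otimes> g = g \<otimes> h"
  shows "comm_group G"
proof -
  have "generate G {g} \<lhd> G"
    by (rule normal_generateI) (use g central in \<open>auto simp: m_assoc\<close>)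
  moreover have "g \<in> generate G {g}" by (rule generate.incl) simp
  ultimately have "generate G {g} = carrier G" using no_real_normal_subgroup g by blast
  then have cyclic: "carrier G = {g [^] (k::int) | k. k \<in> UNIV}" using generate_pow[OF g(1)] by simp
  show ?thesis
  proof (rule group_comm_groupI)
    fix x y assume "x \<in> carrier G" "y \<in> carrier G"
    then obtain a b :: int where "x = g [^] a" "y = g [^] b" using cyclic by blast
    then show "x \<otimes> y = y \<otimes> x" using g(1) by (simp add: int_pow_mult[symmetric] add.commute)
  qed
qed

lemma commutator_closure_eq_carrier:
  assumes fin: "finite (carrier G)" and nc: "\<not> comm_group G" and g: "g \<in> carrier G" "g \<noteq> \<one>"
  shows "commutator_closure G g = carrier G"
proof (rule ccontr)
  assume "commutator_closure G g \<noteq> carrier G"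
  then have trivial: "commutator_closure G g = {\<one>}"
    using no_real_normal_subgroup commutator_closure_normal[OF fin g(1)] by blast
  have "h \<otimes> g = g \<otimes> h" if h: "h \<in> carrier G" for h
  proof -
    have "h \<otimes> g \<otimes> inv h \<otimes> inv g = \<one>"
      using trivial commutators_with_subset_closure[OF g(1)] commutator_in_commutators_with[OF h] by blast
    then have "h \<otimes> g \<otimes> inv h \<otimes> inv g \<otimes> (g \<otimes> h) = g \<otimes> h" using g h by simp
    then show ?thesis using g h by (simp add: m_assoc inv_mult_cancel_left)
  qed
  then show False using central_element_imp_comm_group g nc by blast
qed

lemma uniform_commutator_width:
  assumes fin: "finite (carrier G)" and nc: "\<not> comm_group G"
  shows "\<exists>K. \<forall>g \<in> carrier G - {\<one>}. commutator_products G g K = carrier G"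
proof -
  define P where "P k = {(g, s). g \<in> carrier G \<and> s \<in> commutator_products G g k}" for k
  have "(carrier G - {\<one>}) \<times> carrier G \<subseteq> (\<Union>k. P k)"
    using commutator_closure_eq_carrier[OF fin nc] by (force simp: P_def commutator_closure_def)
  moreover have "P k \<subseteq> P m" if "k \<le> m" for k m
    using commutator_products_mono that by (auto simp: P_def)
  ultimately obtain K where "(carrier G - {\<one>}) \<times> carrier G \<subseteq> P K"
    using finite_subset_UN_mono[of "(carrier G - {\<one>}) \<times> carrier G" P] fin by blast
  then show ?thesis
    using commutator_products_closed by (auto simp: P_def intro!: exI[of _ K])
qed

end

lemma commutators_with_product_group:
  assumes groups: "\<And>i. i \<in> I \<Longrightarrow> group (G i)"
    and x: "x \<in> carrier (product_group I G)" and c: "c \<in> carrier (product_group I G)"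
    and comm: "\<forall>i\<in>I. c i \<in> commutators_with (G i) (x i)"
  shows "c \<in> commutators_with (product_group I G) x"
proof -
  let ?P = "product_group I G"
  have "\<forall>i\<in>I. \<exists>h. h \<in> carrier (G i) \<and> c i = h \<otimes>\<^bsub>G i\<^esub> x i \<otimes>\<^bsub>G i\<^esub> inv\<^bsub>G i\<^esub> h \<otimes>\<^bsub>G i\<^esub> inv\<^bsub>G i\<^esub> x i"
    using comm unfolding commutators_with_def by blast
  then obtain h where h: "\<forall>i\<in>I. h i \<in> carrier (G i) \<and>
      c i = h i \<otimes>\<^bsub>G i\<^esub> x i \<otimes>\<^bsub>G i\<^esub> inv\<^bsub>G i\<^esub> h i \<otimes>\<^bsub>G i\<^esub> inv\<^bsub>G i\<^esub> x i"
    by (rule bchoice[THEN exE])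
  define h' where "h' = restrict h I"
  have h': "h' \<in> carrier ?P" using h by (simp add: h'_def)
  have "c = h' \<otimes>\<^bsub>?P\<^esub> x \<otimes>\<^bsub>?P\<^esub> inv\<^bsub>?P\<^esub> h' \<otimes>\<^bsub>?P\<^esub> inv\<^bsub>?P\<^esub> x"
  proof
    have inv_h: "inv\<^bsub>?P\<^esub> h' = (\<lambda>i\<in>I. inv\<^bsub>G i\<^esub> h' i)"
      by (rule inv_product_group) (use h' groups in simp_all)
    have inv_x: "inv\<^bsub>?P\<^esub> x = (\<lambda>i\<in>I. inv\<^bsub>G i\<^esub> x i)"
      by (rule inv_product_group) (use x groups in simp_all)
    fix i show "c i = (h' \<otimes>\<^bsub>?P\<^esub> x \<otimes>\<^bsub>?P\<^esub> inv\<^bsub>?P\<^esub> h' \<otimes>\<^bsub>?P\<^esub> inv\<^bsub>?P\<^esub> x) i"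
    proof (cases "i \<in> I")
      case True
      then have "h' i = h i" by (simp add: h'_def)
      with True show ?thesis
        using h by (simp only: inv_h inv_x mult_product_group restrict_apply if_True)
    next
      case False
      then show ?thesis
        using PiE_arb[OF c[unfolded carrier_product_group]]
        by (simp only: mult_product_group restrict_apply if_False)
    qed
  qed
  then show ?thesis using group.commutator_in_commutators_with[OF _ h'] groups by simp
qed

lemma commutator_products_product_group:
  assumes groups: "\<And>i. i \<in> I \<Longrightarrow> group (G i)" and x: "x \<in> carrier (product_group I G)"
  shows "y \<in> carrier (product_group I G) \<Longrightarrow> \<forall>i\<in>I. y i \<in> commutator_products (G i) (x i) k
    \<Longrightarrow> y \<in> commutator_products (product_group I G) x k"
proof (induction k arbitrary: y)
  case 0
  then have "y = \<one>\<^bsub>product_group I G\<^esub>" by (auto simp: fun_eq_iff PiE_def extensional_def)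
  then show ?case by (simp add: restrict_def)
next
  case (Suc k)
  let ?P = "product_group I G"
  have "\<forall>i\<in>I. \<exists>c b. y i = c \<otimes>\<^bsub>G i\<^esub> b \<and> c \<in> commutators_with (G i) (x i) \<and>
      b \<in> commutator_products (G i) (x i) k"
    using Suc.prems(2) by simp
  then obtain c where "\<forall>i\<in>I. \<exists>b. y i = c i \<otimes>\<^bsub>G i\<^esub> b \<and> c i \<in> commutators_with (G i) (x i) \<and>
      b \<in> commutator_products (G i) (x i) k"
    by (rule bchoice[THEN exE])
  then obtain b where cb: "\<forall>i\<in>I. y i = c i \<otimes>\<^bsub>G i\<^esub> b i \<and> c i \<in> commutators_with (G i) (x i) \<and>
      b i \<in> commutator_products (G i) (x i) k"
    by (rule bchoice[THEN exE])
  define c' where "c' = restrict c I"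
  define b' where "b' = restrict b I"
  have "c i \<in> carrier (G i)" "b i \<in> carrier (G i)" if i: "i \<in> I" for i
  proof -
    have "x i \<in> carrier (G i)" using x i by auto
    then show "c i \<in> carrier (G i)" "b i \<in> carrier (G i)"
      using cb i group.commutators_with_closed[OF groups[OF i]]
        group.commutator_products_closed[OF groups[OF i]] by blast+
  qed
  then have c': "c' \<in> carrier ?P" and b': "b' \<in> carrier ?P" by (simp_all add: c'_def b'_def)
  have "c' \<in> commutators_with ?P x"
    using commutators_with_product_group[OF groups x c'] cb by (simp add: c'_def)
  moreover have "b' \<in> commutator_products ?P x k"
    by (rule Suc.IH[OF b']) (use cb in \<open>simp add: b'_def\<close>)
  moreover have "y = c' \<otimes>\<^bsub>?P\<^esub> b'"
  proof
    fix i show "y i = (c' \<otimes>\<^bsub>?P\<^esub> b') i"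
      using cb PiE_arb[OF Suc.prems(1)[unfolded carrier_product_group]]
      by (cases "i \<in> I") (simp_all add: c'_def b'_def)
  qed
  ultimately show ?case unfolding commutator_products.simps by blast
qed

section \<open>Normal subgroups of a power of a simple group\<close>

definition support :: "('a, 'b) monoid_scheme \<Rightarrow> 'i set \<Rightarrow> ('i \<Rightarrow> 'a) \<Rightarrow> 'i set" where
  "support S I x = {i \<in> I. x i \<noteq> \<one>\<^bsub>S\<^esub>}"

definition support_closed :: "('a, 'b) monoid_scheme \<Rightarrow> 'i set \<Rightarrow> ('i \<Rightarrow> 'a) set \<Rightarrow> bool" where
  "support_closed S I N \<longleftrightarrow>
     (\<forall>x\<in>N. \<forall>y\<in>carrier (product_group I (\<lambda>_. S)). support S I y \<subseteq> support S I x \<longrightarrow> y \<in> N)"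

theorem normal_subgroup_power_of_simple_support_closed:
  assumes "simple_group S" and "finite (carrier S)" and "\<not> comm_group S"
    and N: "N \<lhd> product_group I (\<lambda>_. S)"
  shows "support_closed S I N"
  unfolding support_closed_def
proof (intro ballI impI)
  fix x y
  assume x: "x \<in> N" and y: "y \<in> carrier (product_group I (\<lambda>_. S))"
    and supp: "support S I y \<subseteq> support S I x"
  interpret S: simple_group S by fact
  have G: "group (product_group I (\<lambda>_. S))" by simp
  obtain K where K: "\<forall>g \<in> carrier S - {\<one>\<^bsub>S\<^esub>}. commutator_products S g K = carrier S"
    using S.uniform_commutator_width[OF assms(2,3)] ..
  have x_carrier: "x \<in> carrier (product_group I (\<lambda>_. S))"
    using subgroup.mem_carrier[OF normal_imp_subgroup[OF N] x] .
  have "y i \<in> commutator_products S (x i) K" if i: "i \<in> I" for i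
  proof (cases "x i = \<one>\<^bsub>S\<^esub>")
    case True
    then have "y i = \<one>\<^bsub>S\<^esub>" using supp i by (auto simp: support_def)
    moreover have "\<one>\<^bsub>S\<^esub> \<in> commutator_products S (x i) K"
      using S.commutator_products_mono[of "x i" 0 K] True by simp
    ultimately show ?thesis by simp
  next
    case False
    moreover have "x i \<in> carrier S" "y i \<in> carrier S" using i x_carrier y by auto
    ultimately show ?thesis using K by blast
  qed
  then have "y \<in> commutator_products (product_group I (\<lambda>_. S)) x K"
    using commutator_products_product_group[of I "\<lambda>_. S", OF _ x_carrier y] by blast
  then show "y \<in> N"
    using group.commutator_products_subset_normal[OF G N x] by blast
qed

section \<open>Negligible sets of indices\<close>

locale support_closed_normal_subgroup =
  fixes S :: "('a, 'b) monoid_scheme" and I :: "'i set" and N :: "('i \<Rightarrow> 'a) set"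
  assumes group_S: "group S"
    and normal_N: "N \<lhd> product_group I (\<lambda>_. S)"
    and support_closed_N: "support_closed S I N"
begin

sublocale S: group S by (rule group_S)

abbreviation G where "G \<equiv> product_group I (\<lambda>_. S)"

lemma group_G: "group G"
  using group_S by simp

lemma subgroup_N: "subgroup N G"
  using normal_N normal_imp_subgroup by blast

definition negligible :: "'i set \<Rightarrow> bool" where
  "negligible J \<longleftrightarrow> (\<forall>y\<in>carrier G. support S I y \<subseteq> J \<longrightarrow> y \<in> N)"

lemma mem_N_iff_negligible_support: "x \<in> carrier G \<Longrightarrow> x \<in> N \<longleftrightarrow> negligible (support S I x)"
  using support_closed_N unfolding support_closed_def negligible_def by blast

lemma negligible_subset: "negligible B \<Longrightarrow> A \<subseteq> B \<Longrightarrow> negligible A"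
  unfolding negligible_def by blast

lemma negligible_empty: "negligible {}"
  unfolding negligible_def
proof (intro ballI impI)
  fix y assume "y \<in> carrier G" "support S I y \<subseteq> {}"
  then have "y = \<one>\<^bsub>G\<^esub>" by (auto simp: support_def fun_eq_iff PiE_def extensional_def)
  then show "y \<in> N" using subgroup.one_closed[OF subgroup_N] by simp
qed

lemma negligible_Un:
  assumes A: "negligible A" and B: "negligible B"
  shows "negligible (A \<union> B)"
  unfolding negligible_def
proof (intro ballI impI)
  fix y assume y: "y \<in> carrier G" and supp: "support S I y \<subseteq> A \<union> B"
  define y\<^sub>A where "y\<^sub>A = (\<lambda>i\<in>I. if i \<in> A then y i else \<one>\<^bsub>S\<^esub>)"
  define y\<^sub>B where "y\<^sub>B = (\<lambda>i\<in>I. if i \<in> A then \<one>\<^bsub>S\<^esub> else y i)"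
  have "y\<^sub>A \<in> carrier G" "y\<^sub>B \<in> carrier G"
    using y by (auto simp: y\<^sub>A_def y\<^sub>B_def)
  moreover have "support S I y\<^sub>A \<subseteq> A" "support S I y\<^sub>B \<subseteq> B"
    using supp by (auto simp: support_def y\<^sub>A_def y\<^sub>B_def)
  ultimately have "y\<^sub>A \<in> N" "y\<^sub>B \<in> N" using A B unfolding negligible_def by blast+
  moreover have "y = y\<^sub>A \<otimes>\<^bsub>G\<^esub> y\<^sub>B"
    using y by (auto simp: y\<^sub>A_def y\<^sub>B_def fun_eq_iff PiE_def extensional_def Pi_iff)
  ultimately show "y \<in> N" using subgroup.m_closed[OF subgroup_N] by simp
qed

lemma negligible_UN:
  "finite F \<Longrightarrow> (\<And>j. j \<in> F \<Longrightarrow> negligible (A j)) \<Longrightarrow> negligible (\<Union>j\<in>F. A j)"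
  by (induction F rule: finite_induct) (auto simp: negligible_empty negligible_Un)

definition nonnegligible_family :: "nat \<Rightarrow> (nat \<Rightarrow> 'i set) \<Rightarrow> bool" where
  "nonnegligible_family n A \<longleftrightarrow>
     (\<forall>k<n. A k \<subseteq> I \<and> \<not> negligible (A k)) \<and> disjoint_family_on A {..<n}"

lemma nonnegligible_family_length_le:
  assumes fin: "finite (carrier (G Mod N))" and A: "nonnegligible_family n A"
  shows "n \<le> card (carrier (G Mod N))"
proof -
  have "\<forall>k<n. \<exists>y\<in>carrier G. support S I y \<subseteq> A k \<and> y \<notin> N"
    using A unfolding nonnegligible_family_def negligible_def by blast
  then obtain y where y: "\<And>k. k < n \<Longrightarrow> y k \<in> carrier G \<and> support S I (y k) \<subseteq> A k \<and> y k \<notin> N"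
    by metis
  have "inj_on (\<lambda>k. N #>\<^bsub>G\<^esub> y k) {..<n}"
  proof (rule inj_onI, rule ccontr)
    fix j k assume j: "j \<in> {..<n}" and k: "k \<in> {..<n}" and ne: "j \<noteq> k"
      and "N #>\<^bsub>G\<^esub> y j = N #>\<^bsub>G\<^esub> y k"
    then have "y j \<in> N #>\<^bsub>G\<^esub> y k"
      using group.rcos_self[OF group_G _ subgroup_N] y by blast
    then have quot: "y j \<otimes>\<^bsub>G\<^esub> inv\<^bsub>G\<^esub> y k \<in> N"
      using subgroup.rcos_module_imp[OF subgroup_N group_G] y k by blast
    have "y j i \<otimes>\<^bsub>S\<^esub> inv\<^bsub>S\<^esub> y k i = y j i" if i: "i \<in> support S I (y j)" for i
    proof -
      have "i \<notin> A k"
        using A i y j k ne unfolding nonnegligible_family_def disjoint_family_on_def by blast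
      then have "y k i = \<one>\<^bsub>S\<^esub>" using y k i by (auto simp: support_def)
      moreover have "y j i \<in> carrier S" using y j i by (auto simp: support_def)
      ultimately show ?thesis by simp
    qed
    then have "support S I (y j) \<subseteq> support S I (y j \<otimes>\<^bsub>G\<^esub> inv\<^bsub>G\<^esub> y k)"
      using y j k by (auto simp: support_def)
    moreover have "y j \<otimes>\<^bsub>G\<^esub> inv\<^bsub>G\<^esub> y k \<in> carrier G"
      using quot subgroup.mem_carrier[OF subgroup_N] by blast
    ultimately have "y j \<in> N"
      using quot y j mem_N_iff_negligible_support negligible_subset by blast
    then show False using y j by blast
  qed
  moreover have "(\<lambda>k. N #>\<^bsub>G\<^esub> y k) ` {..<n} \<subseteq> carrier (G Mod N)"
    using y by (auto simp: carrier_FactGroup)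
  ultimately show ?thesis using card_inj_on_le[OF _ _ fin] by fastforce
qed

lemma nonnegligible_family_extend:
  assumes A: "nonnegligible_family n A" and B: "B \<subseteq> I" "\<not> negligible B"
    and disjoint: "\<And>k. k < n \<Longrightarrow> B \<inter> A k = {}"
  shows "nonnegligible_family (Suc n) (A(n := B))"
proof -
  have "disjoint_family_on (A(n := B)) {..<n}"
    using A by (auto simp: nonnegligible_family_def disjoint_family_on_def)
  then have "disjoint_family_on (A(n := B)) (insert n {..<n})"
    using disjoint by (subst disjoint_family_on_insert) auto
  then show ?thesis
    using A B by (auto simp: nonnegligible_family_def lessThan_Suc less_Suc_eq)
qed

lemma nonnegligible_family_shrink:
  assumes A: "nonnegligible_family n A" and k: "k < n" and B: "B \<subseteq> A k" "\<not> negligible B"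
  shows "nonnegligible_family n (A(k := B))"
proof -
  have "disjoint_family_on A {..<n}" using A by (simp add: nonnegligible_family_def)
  then have "disjoint_family_on (A(k := B)) {..<n}"
    by (rule disjoint_family_on_bisimulation) (use B in auto)
  then show ?thesis using A k B by (auto simp: nonnegligible_family_def)
qed

end

section \<open>Atoms and the quotient of finite index\<close>

locale finite_index_support_closed = support_closed_normal_subgroup S I N
  for S :: "('a, 'b) monoid_scheme" and I :: "'i set" and N +
  assumes finite_S: "finite (carrier S)"
    and finite_quotient: "finite (carrier (product_group I (\<lambda>_. S) Mod N))"
begin

definition n_atoms :: nat where
  "n_atoms = (GREATEST n. \<exists>A. nonnegligible_family n A)"

lemma nonnegligible_family_bounded:
  "\<exists>A. nonnegligible_family n A \<Longrightarrow> n \<le> card (carrier (G Mod N))"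
  using nonnegligible_family_length_le[OF finite_quotient] by blast

lemma nonnegligible_family_le_n_atoms: "nonnegligible_family n A \<Longrightarrow> n \<le> n_atoms"
  unfolding n_atoms_def
  by (rule Greatest_le_nat[where P = "\<lambda>n. \<exists>A. nonnegligible_family n A"])
    (blast, rule nonnegligible_family_bounded)

definition atom :: "nat \<Rightarrow> 'i set" where
  "atom = (SOME A. nonnegligible_family n_atoms A)"

lemma nonnegligible_family_atom: "nonnegligible_family n_atoms atom"
proof -
  have "\<exists>A. nonnegligible_family n_atoms A"
    unfolding n_atoms_def
  proof (rule GreatestI_nat[where P = "\<lambda>n. \<exists>A. nonnegligible_family n A"])
    show "\<exists>A. nonnegligible_family 0 A"
      by (rule exI[of _ "\<lambda>_. {}"]) (simp add: nonnegligible_family_def disjoint_family_on_def)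
  qed (rule nonnegligible_family_bounded)
  then show ?thesis unfolding atom_def by (rule someI_ex)
qed

lemma atom_subset: "k < n_atoms \<Longrightarrow> atom k \<subseteq> I"
  and atom_nonnegligible: "k < n_atoms \<Longrightarrow> \<not> negligible (atom k)"
  and atom_disjoint: "j < n_atoms \<Longrightarrow> k < n_atoms \<Longrightarrow> j \<noteq> k \<Longrightarrow> atom j \<inter> atom k = {}"
  using nonnegligible_family_atom
  unfolding nonnegligible_family_def disjoint_family_on_def by blast+

lemma negligible_outside_atoms: "negligible (I - (\<Union>k<n_atoms. atom k))"
proof (rule ccontr)
  assume "\<not> negligible (I - (\<Union>k<n_atoms. atom k))"
  then have "nonnegligible_family (Suc n_atoms) (atom(n_atoms := I - (\<Union>k<n_atoms. atom k)))"
    by (intro nonnegligible_family_extend[OF nonnegligible_family_atom]) auto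
  then have "Suc n_atoms \<le> n_atoms" by (rule nonnegligible_family_le_n_atoms)
  then show False by simp
qed

lemma atom_split:
  assumes k: "k < n_atoms" and B: "B \<subseteq> atom k"
  shows "negligible B \<or> negligible (atom k - B)"
proof (rule ccontr)
  assume "\<not> (negligible B \<or> negligible (atom k - B))"
  then have "nonnegligible_family n_atoms (atom(k := B))"
    using nonnegligible_family_shrink[OF nonnegligible_family_atom k B] by blast
  then have "nonnegligible_family (Suc n_atoms) ((atom(k := B))(n_atoms := atom k - B))"
    using \<open>\<not> (negligible B \<or> _)\<close> atom_subset[OF k] atom_disjoint[OF k] B
    by (intro nonnegligible_family_extend) auto
  then have "Suc n_atoms \<le> n_atoms" by (rule nonnegligible_family_le_n_atoms)
  then show False by simp
qed

lemma almost_constant_on_atom: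
  assumes k: "k < n_atoms" and x: "x \<in> carrier G"
  shows "\<exists>s\<in>carrier S. negligible (atom k - {i. x i = s})"
proof (rule ccontr)
  assume none: "\<not> (\<exists>s\<in>carrier S. negligible (atom k - {i. x i = s}))"
  have "negligible {i \<in> atom k. x i = s}" if s: "s \<in> carrier S" for s
  proof -
    have "atom k - {i \<in> atom k. x i = s} = atom k - {i. x i = s}" by blast
    then have "\<not> negligible (atom k - {i \<in> atom k. x i = s})" using none s by simp
    moreover have "{i \<in> atom k. x i = s} \<subseteq> atom k" by blast
    ultimately show ?thesis using atom_split[OF k] by blast
  qed
  then have "negligible (\<Union>s\<in>carrier S. {i \<in> atom k. x i = s})"
    by (rule negligible_UN[OF finite_S])
  moreover have "atom k \<subseteq> (\<Union>s\<in>carrier S. {i \<in> atom k. x i = s})"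
    using atom_subset[OF k] x by (force simp: PiE_iff)
  ultimately show False using atom_nonnegligible[OF k] negligible_subset by blast
qed

lemma almost_constant_value_unique:
  assumes k: "k < n_atoms"
    and s: "negligible (atom k - {i. x i = s})" and t: "negligible (atom k - {i. x i = t})"
  shows "s = t"
proof (rule ccontr)
  assume "s \<noteq> t"
  then have "atom k \<subseteq> (atom k - {i. x i = s}) \<union> (atom k - {i. x i = t})" by blast
  then show False using negligible_Un[OF s t] negligible_subset atom_nonnegligible[OF k] by blast
qed

text \<open>The limit of \<open>x\<close> along the ultrafilter of non-negligible subsets of the \<open>k\<close>-th atom.\<close>

definition atom_limit :: "nat \<Rightarrow> ('i \<Rightarrow> 'a) \<Rightarrow> 'a" where
  "atom_limit k x = (THE s. s \<in> carrier S \<and> negligible (atom k - {i. x i = s}))"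

lemma atom_limit_eqI:
  assumes k: "k < n_atoms" and "s \<in> carrier S" and "negligible (atom k - {i. x i = s})"
  shows "atom_limit k x = s"
  unfolding atom_limit_def
proof (rule the_equality)
  fix t assume "t \<in> carrier S \<and> negligible (atom k - {i. x i = t})"
  then show "t = s" using almost_constant_value_unique[OF k _ assms(3)] by simp
qed (use assms in blast)

lemma atom_limit:
  assumes k: "k < n_atoms" and x: "x \<in> carrier G"
  shows "atom_limit k x \<in> carrier S" and "negligible (atom k - {i. x i = atom_limit k x})"
proof -
  obtain s where "s \<in> carrier S" "negligible (atom k - {i. x i = s})"
    using almost_constant_on_atom[OF k x] ..
  moreover from this have "atom_limit k x = s" by (rule atom_limit_eqI[OF k])
  ultimately show "atom_limit k x \<in> carrier S" "negligible (atom k - {i. x i = atom_limit k x})"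
    by simp_all
qed

lemma atom_limit_mult:
  assumes k: "k < n_atoms" and x: "x \<in> carrier G" and y: "y \<in> carrier G"
  shows "atom_limit k (x \<otimes>\<^bsub>G\<^esub> y) = atom_limit k x \<otimes>\<^bsub>S\<^esub> atom_limit k y"
proof (rule atom_limit_eqI[OF k])
  show "atom_limit k x \<otimes>\<^bsub>S\<^esub> atom_limit k y \<in> carrier S"
    using atom_limit(1)[OF k x] atom_limit(1)[OF k y] by (rule S.m_closed)
  have "atom k - {i. (x \<otimes>\<^bsub>G\<^esub> y) i = atom_limit k x \<otimes>\<^bsub>S\<^esub> atom_limit k y}
      \<subseteq> (atom k - {i. x i = atom_limit k x}) \<union> (atom k - {i. y i = atom_limit k y})"
    using atom_subset[OF k] by auto
  then show "negligible (atom k - {i. (x \<otimes>\<^bsub>G\<^esub> y) i = atom_limit k x \<otimes>\<^bsub>S\<^esub> atom_limit k y})"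
    by (rule negligible_subset[OF negligible_Un[OF atom_limit(2)[OF k x] atom_limit(2)[OF k y]]])
qed

abbreviation P where "P \<equiv> product_group {..<n_atoms} (\<lambda>_. S)"

definition atom_limits :: "('i \<Rightarrow> 'a) \<Rightarrow> nat \<Rightarrow> 'a" where
  "atom_limits x = (\<lambda>k\<in>{..<n_atoms}. atom_limit k x)"

lemma atom_limits_hom: "group_hom G P atom_limits"
proof -
  have "atom_limits \<in> hom G P"
  proof (rule homI)
    show "atom_limits x \<in> carrier P" if "x \<in> carrier G" for x
      using atom_limit(1)[OF _ that] by (auto simp: atom_limits_def)
    show "atom_limits (x \<otimes>\<^bsub>G\<^esub> y) = atom_limits x \<otimes>\<^bsub>P\<^esub> atom_limits y"
      if "x \<in> carrier G" "y \<in> carrier G" for x y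
      using atom_limit_mult that by (auto simp: atom_limits_def intro!: restrict_ext)
  qed
  then show ?thesis using group_G group_S by (simp add: group_hom_def group_hom_axioms_def)
qed

lemma atom_limits_surj: "atom_limits ` carrier G = carrier P"
proof
  show "atom_limits ` carrier G \<subseteq> carrier P"
    using group_hom.hom_closed[OF atom_limits_hom] by auto
  show "carrier P \<subseteq> atom_limits ` carrier G"
  proof
    fix z assume z: "z \<in> carrier P"
    define index where "index i = (THE k. k < n_atoms \<and> i \<in> atom k)" for i
    have index: "index i = k" if k: "k < n_atoms" and i: "i \<in> atom k" for i k
      unfolding index_def
    proof (rule the_equality)
      fix j assume "j < n_atoms \<and> i \<in> atom j"
      then show "j = k" using atom_disjoint[OF _ k] i by blast
    qed (use k i in blast)
    define x where "x = (\<lambda>i\<in>I. if \<exists>k<n_atoms. i \<in> atom k then z (index i) else \<one>\<^bsub>S\<^esub>)"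
    have x: "x \<in> carrier G" using z index by (force simp: x_def PiE_iff)
    have "atom_limits x = z"
    proof
      fix k show "atom_limits x k = z k"
      proof (cases "k < n_atoms")
        case True
        have "atom k - {i. x i = z k} = {}" using index atom_subset True by (auto simp: x_def)
        moreover have "z k \<in> carrier S" using z True by auto
        ultimately have "atom_limit k x = z k" using atom_limit_eqI[OF True] negligible_empty by metis
        then show ?thesis using True by (simp add: atom_limits_def)
      qed (use z in \<open>auto simp: atom_limits_def PiE_def extensional_def\<close>)
    qed
    then show "z \<in> atom_limits ` carrier G" using x by blast
  qed
qed

lemma kernel_atom_limits: "kernel G P atom_limits = N"
proof (intro equalityI subsetI)
  fix x assume "x \<in> kernel G P atom_limits"
  then have x: "x \<in> carrier G" and trivial: "atom_limits x = \<one>\<^bsub>P\<^esub>" by (simp_all add: kernel_def)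
  have "atom_limit k x = \<one>\<^bsub>S\<^esub>" if "k < n_atoms" for k
    using fun_cong[OF trivial, of k] that by (simp add: atom_limits_def)
  then have "negligible (atom k - {i. x i = \<one>\<^bsub>S\<^esub>})" if "k \<in> {..<n_atoms}" for k
    using atom_limit(2)[OF _ x, of k] that by simp
  then have "negligible ((I - (\<Union>k<n_atoms. atom k)) \<union> (\<Union>k<n_atoms. atom k - {i. x i = \<one>\<^bsub>S\<^esub>}))"
    by (intro negligible_Un negligible_outside_atoms negligible_UN) simp_all
  moreover have "support S I x \<subseteq> (I - (\<Union>k<n_atoms. atom k)) \<union> (\<Union>k<n_atoms. atom k - {i. x i = \<one>\<^bsub>S\<^esub>})"
    by (auto simp: support_def)
  ultimately show "x \<in> N"
    using mem_N_iff_negligible_support[OF x] negligible_subset by blast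
next
  fix x assume xN: "x \<in> N"
  then have x: "x \<in> carrier G" using subgroup.mem_carrier[OF subgroup_N] by blast
  have "atom_limit k x = \<one>\<^bsub>S\<^esub>" if k: "k < n_atoms" for k
  proof (rule atom_limit_eqI[OF k])
    have "atom k - {i. x i = \<one>\<^bsub>S\<^esub>} \<subseteq> support S I x"
      using atom_subset[OF k] by (auto simp: support_def)
    then show "negligible (atom k - {i. x i = \<one>\<^bsub>S\<^esub>})"
      using mem_N_iff_negligible_support[OF x] xN negligible_subset by blast
  qed simp
  then have "atom_limits x = \<one>\<^bsub>P\<^esub>" by (auto simp: atom_limits_def)
  then show "x \<in> kernel G P atom_limits" using x by (simp add: kernel_def)
qed

theorem quotient_iso_power: "G Mod N \<cong> P"
  using group_hom.FactGroup_iso[OF atom_limits_hom atom_limits_surj]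
  unfolding kernel_atom_limits .

end

corollary finite_quotient_of_power_of_simple_group:
  assumes "simple_group S" and "finite (carrier S)" and "\<not> comm_group S"
    and "N \<lhd> product_group I (\<lambda>_. S)"
    and "finite (carrier (product_group I (\<lambda>_. S) Mod N))"
  shows "\<exists>n::nat. product_group {..<n} (\<lambda>_. S) \<cong> product_group I (\<lambda>_. S) Mod N"
proof -
  have "support_closed_normal_subgroup S I N"
    using assms(1,4) normal_subgroup_power_of_simple_support_closed[OF assms(1-4)]
    by (simp add: support_closed_normal_subgroup_def simple_group_def)
  then interpret finite_index_support_closed S I N
    using assms(2,5)
    by (simp add: finite_index_support_closed_def finite_index_support_closed_axioms_def)
  show ?thesis using group.iso_sym[OF normal.factorgroup_is_group[OF normal_N] quotient_iso_power] ..
qed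

definition transport_monoid :: "('a \<Rightarrow> 'c) \<Rightarrow> ('a, 'b) monoid_scheme \<Rightarrow> 'c monoid" where
  "transport_monoid f S =
     \<lparr>carrier = f ` carrier S,
      monoid.mult = (\<lambda>u v. f (inv_into (carrier S) f u \<otimes>\<^bsub>S\<^esub> inv_into (carrier S) f v)),
      one = f \<one>\<^bsub>S\<^esub>\<rparr>"

lemma transport_monoid_hom:
  assumes "inj_on f (carrier S)" and "monoid S"
  shows "f \<in> hom S (transport_monoid f S)"
  by (rule homI) (use assms in \<open>auto simp: transport_monoid_def monoid.m_closed\<close>)

lemma transport_monoid_group:
  assumes "inj_on f (carrier S)" and "group S"
  shows "group (transport_monoid f S)"
proof -
  have "group ((transport_monoid f S)\<lparr>carrier := f ` carrier S, one := f \<one>\<^bsub>S\<^esub>\<rparr>)"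
    using group.hom_imp_img_group[OF assms(2) transport_monoid_hom[OF assms(1) group.is_monoid[OF assms(2)]]] .
  then show ?thesis by (simp add: transport_monoid_def)
qed

lemma transport_monoid_iso:
  assumes "inj_on f (carrier S)" and "group S"
  shows "f \<in> iso S (transport_monoid f S)"
  using assms transport_monoid_hom[OF assms(1) group.is_monoid[OF assms(2)]]
  by (auto simp: iso_def bij_betw_def transport_monoid_def)

theorem mainTheorem9:
  fixes S :: "('a, 'b) monoid_scheme" and I :: "'i set" and N :: "('i \<Rightarrow> 'a) set"
  assumes "simple_group S"
    and "finite (carrier S)"
    and "\<not> comm_group S"
    and "N \<lhd> product_group I (\<lambda>_. S)"
    and "finite (carrier (product_group I (\<lambda>_. S) Mod N))"
  shows "\<exists>(n::nat) (T :: nat \<Rightarrow> ('i \<Rightarrow> 'a) set set monoid).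
           (\<forall>k<n. simple_group (T k) \<and> finite (carrier (T k)) \<and> \<not> comm_group (T k)) \<and>
           product_group {..<n} T \<cong> product_group I (\<lambda>_. S) Mod N"
proof -
  obtain n :: nat where n: "product_group {..<n} (\<lambda>_. S) \<cong> product_group I (\<lambda>_. S) Mod N"
    using finite_quotient_of_power_of_simple_group[OF assms] ..
  \<comment> \<open>the statement fixes the type of the factors, so \<open>S\<close> is copied into it along an injection\<close>
  define T where "T = transport_monoid (\<lambda>a. {{\<lambda>_::'i. a}}) S"
  have S: "group S" using assms(1) simple_group.axioms(1) by blast
  have "inj_on (\<lambda>a. {{\<lambda>_::'i. a}}) (carrier S)" by (auto simp: inj_on_def fun_eq_iff)
  then have T: "group T" and iso: "S \<cong> T"
    using transport_monoid_group transport_monoid_iso S unfolding T_def is_iso_def by blast+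
  have "simple_group T" using simple_group.iso_simple[OF assms(1) T] iso unfolding is_iso_def by blast
  moreover have "finite (carrier T)" using iso_finite[OF iso] assms(2) by simp
  moreover have "\<not> comm_group T"
    using comm_group.iso_imp_comm_group[OF _ group.iso_sym[OF S iso]] group.is_monoid[OF S] assms(3)
    by blast
  moreover have "product_group {..<n} (\<lambda>_. T) \<cong> product_group {..<n} (\<lambda>_. S)"
    using group.iso_sym[OF S iso] iso_product_groupI[of "{..<n}" "\<lambda>_. T" "\<lambda>_. S"] S T by blast
  ultimately show ?thesis
    using iso_trans[OF _ n] by (intro exI[of _ n] exI[of _ "\<lambda>_. T"]) simp
qed

end
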